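(* Let $C=(C_{i,j})$ be an $m\times n$ evolutionary stable (ES) configuration with $m>2$. Then there is no $j$ with $2\le j\le n-1$ such that $C_{m-1,j-1}=C_{m-1,j+1}=0$ and $C_{m-1,j}=1$; that is, no two empty lots in row $m-1$ are separated by a single occupied lot.
   Context: An $m\times n$ configuration is a $0$-$1$ matrix $C=(C_{i,j})$, $1\le i\le m$, $1\le j\le n$; $C_{i,j}=1$ means lot $(i,j)$ is occupied by a house. Row $1$ is the northernmost, row $m$ the southernmost; column $1$ westernmost, column $n$ easternmost. A house at $(i,j)$ is blocked from sunlight if the three lots $(i,j-1)$, $(i,j+1)$, $(i+1,j)$ all lie inside the grid and are all occupied (lots outside the grid never obstruct sunlight). $C$ is permissible if no house is blocked, and maximal if it is permissible and setting any single empty lot to $1$ yields a non-permissible configuration. A maximal configuration is resistant to predators if, for every empty lot, putting a house on it results in that new house being blocked; it is resistant to altruists if, for every empty lot, putting a house on it results in some other (already existing) house being blocked. An ES configuration is a maximal configuration resistant to both predators and altruists. *)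

theory Defs
  imports Main
begin

text \<open>An m x n configuration is modelled as C :: nat => nat => bool, where C i j means
  lot (i,j) is occupied; only indices 1 <= i <= m, 1 <= j <= n are meaningful.
  Row 1 is northernmost, row m southernmost; (i+1,j) is the lot south of (i,j).\<close>

definition in_grid :: "nat \<Rightarrow> nat \<Rightarrow> nat \<Rightarrow> nat \<Rightarrow> bool" where
  "in_grid m n i j \<longleftrightarrow> 1 \<le> i \<and> i \<le> m \<and> 1 \<le> j \<and> j \<le> n"

definition occ :: "nat \<Rightarrow> nat \<Rightarrow> (nat \<Rightarrow> nat \<Rightarrow> bool) \<Rightarrow> nat \<Rightarrow> nat \<Rightarrow> bool" where
  "occ m n C i j \<longleftrightarrow> in_grid m n i j \<and> C i j"

definition blocked :: "nat \<Rightarrow> nat \<Rightarrow> (nat \<Rightarrow> nat \<Rightarrow> bool) \<Rightarrow> nat \<Rightarrow> nat \<Rightarrow> bool" where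
  "blocked m n C i j \<longleftrightarrow> occ m n C i j \<and> j \<ge> 2 \<and> occ m n C i (j - 1) \<and> occ m n C i (j + 1)
     \<and> occ m n C (i + 1) j"

definition permissible :: "nat \<Rightarrow> nat \<Rightarrow> (nat \<Rightarrow> nat \<Rightarrow> bool) \<Rightarrow> bool" where
  "permissible m n C \<longleftrightarrow> (\<forall>i j. \<not> blocked m n C i j)"

definition add_house :: "(nat \<Rightarrow> nat \<Rightarrow> bool) \<Rightarrow> nat \<Rightarrow> nat \<Rightarrow> (nat \<Rightarrow> nat \<Rightarrow> bool)" where
  "add_house C i j = C(i := (C i)(j := True))"

definition maximal :: "nat \<Rightarrow> nat \<Rightarrow> (nat \<Rightarrow> nat \<Rightarrow> bool) \<Rightarrow> bool" where
  "maximal m n C \<longleftrightarrow> permissible m n C \<and>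
     (\<forall>i j. in_grid m n i j \<and> \<not> C i j \<longrightarrow> \<not> permissible m n (add_house C i j))"

definition resistant_predators :: "nat \<Rightarrow> nat \<Rightarrow> (nat \<Rightarrow> nat \<Rightarrow> bool) \<Rightarrow> bool" where
  "resistant_predators m n C \<longleftrightarrow> maximal m n C \<and>
     (\<forall>i j. in_grid m n i j \<and> \<not> C i j \<longrightarrow> blocked m n (add_house C i j) i j)"

definition resistant_altruists :: "nat \<Rightarrow> nat \<Rightarrow> (nat \<Rightarrow> nat \<Rightarrow> bool) \<Rightarrow> bool" where
  "resistant_altruists m n C \<longleftrightarrow> maximal m n C \<and>
     (\<forall>i j. in_grid m n i j \<and> \<not> C i j \<longrightarrow>
        (\<exists>i' j'. occ m n C i' j' \<and> blocked m n (add_house C i j) i' j'))"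

definition ES :: "nat \<Rightarrow> nat \<Rightarrow> (nat \<Rightarrow> nat \<Rightarrow> bool) \<Rightarrow> bool" where
  "ES m n C \<longleftrightarrow> maximal m n C \<and> resistant_predators m n C \<and> resistant_altruists m n C"

end

theory Submission
  imports Defs
begin

text \<open>Call a house of a row lone if both its horizontal neighbours are empty, and the middle of a
  triple if both are houses. In an ES configuration every empty lot has houses to its west, east
  and south. Hence no row above the last contains four consecutive houses, consecutive empty lots
  of such a row are 2, 3 or 4 columns apart, and a lone house in row r + 1 forces an empty lot
  above it and, by resistance to altruists, a triple in row r - 1.
  Scanning the empty lots of row a + 1 from west to east, these local shapes show: if in row a
  every lone house is preceded by a triple with no lone house in between, then the same holds in
  row a + 2. Starting from rows 2 and 3 this reaches row m - 1, which contains no triple because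
  row m is full; so it contains no lone house either.\<close>

definition lone_house :: "nat \<Rightarrow> (nat \<Rightarrow> bool) \<Rightarrow> nat \<Rightarrow> bool" where
  "lone_house n \<rho> c \<longleftrightarrow> 2 \<le> c \<and> c + 1 \<le> n \<and> \<not> \<rho> (c - 1) \<and> \<rho> c \<and> \<not> \<rho> (c + 1)"

definition house_triple :: "nat \<Rightarrow> (nat \<Rightarrow> bool) \<Rightarrow> nat \<Rightarrow> bool" where
  "house_triple n \<rho> c \<longleftrightarrow> 2 \<le> c \<and> c + 1 \<le> n \<and> \<rho> (c - 1) \<and> \<rho> c \<and> \<rho> (c + 1)"

fun last_pattern_triple :: "nat \<Rightarrow> (nat \<Rightarrow> bool) \<Rightarrow> nat \<Rightarrow> bool" where
  "last_pattern_triple n \<rho> 0 = False"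
| "last_pattern_triple n \<rho> (Suc c) \<longleftrightarrow>
     house_triple n \<rho> (Suc c) \<or> (last_pattern_triple n \<rho> c \<and> \<not> lone_house n \<rho> (Suc c))"

definition triple_before_lone :: "nat \<Rightarrow> (nat \<Rightarrow> bool) \<Rightarrow> bool" where
  "triple_before_lone n \<rho> \<longleftrightarrow> (\<forall>c. lone_house n \<rho> c \<longrightarrow> last_pattern_triple n \<rho> (c - 1))"

lemma last_pattern_triple_at_house:
  assumes "\<rho> p" "2 \<le> p" "p < n"
  shows "last_pattern_triple n \<rho> p \<longleftrightarrow>
    \<rho> (p - 1) \<and> \<rho> (p + 1) \<or> last_pattern_triple n \<rho> (p - 1) \<and> (\<rho> (p - 1) \<or> \<rho> (p + 1))"
  using assms last_pattern_triple.simps(2)[of n \<rho> "p - 1"]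
  by (auto simp: house_triple_def lone_house_def)

lemma lone_house_at_house:
  assumes "\<rho> p" "2 \<le> p" "p < n"
  shows "lone_house n \<rho> p \<longleftrightarrow> \<not> \<rho> (p - 1) \<and> \<not> \<rho> (p + 1)"
  using assms by (auto simp: lone_house_def)

lemma last_pattern_triple_const:
  assumes "p0 \<le> p" "\<And>q. p0 < q \<Longrightarrow> q \<le> p \<Longrightarrow> \<not> house_triple n \<rho> q \<and> \<not> lone_house n \<rho> q"
  shows "last_pattern_triple n \<rho> p = last_pattern_triple n \<rho> p0"
  using assms by (induction p) (auto simp: le_Suc_eq)

lemma last_pattern_tripleE:
  assumes "last_pattern_triple n \<rho> c"
  obtains p where "p \<le> c" "house_triple n \<rho> p"
  using assms by (induction c) (auto intro: le_SucI)

lemma last_pattern_triple_small: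
  "\<not> last_pattern_triple n \<rho> 1"
  "last_pattern_triple n \<rho> 2 \<longleftrightarrow> house_triple n \<rho> 2"
  "last_pattern_triple n \<rho> 3 \<longleftrightarrow> house_triple n \<rho> 3 \<or> house_triple n \<rho> 2 \<and> \<not> lone_house n \<rho> 3"
  "last_pattern_triple n \<rho> 4 \<longleftrightarrow> house_triple n \<rho> 4 \<or> last_pattern_triple n \<rho> 3 \<and> \<not> lone_house n \<rho> 4"
  by (simp_all add: numeral_eq_Suc house_triple_def)

lemma empty_lots_induct:
  fixes p N :: nat
  assumes "1 \<le> p" "p \<le> N" "\<not> \<rho> p"
    and first: "\<And>p. 1 \<le> p \<Longrightarrow> p \<le> N \<Longrightarrow> \<not> \<rho> p \<Longrightarrow> (\<forall>q. 1 \<le> q \<and> q < p \<longrightarrow> \<rho> q) \<Longrightarrow> P p"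
    and step: "\<And>p0 p. 1 \<le> p0 \<Longrightarrow> \<not> \<rho> p0 \<Longrightarrow> p0 < p \<Longrightarrow> p \<le> N \<Longrightarrow> \<not> \<rho> p \<Longrightarrow>
      (\<forall>q. p0 < q \<and> q < p \<longrightarrow> \<rho> q) \<Longrightarrow> P p0 \<Longrightarrow> P p"
  shows "P p"
  using assms(1-3)
proof (induction p rule: less_induct)
  case (less p)
  define S where "S = {q. 1 \<le> q \<and> q < p \<and> \<not> \<rho> q}"
  show ?case
  proof (cases "S = {}")
    case True
    then show ?thesis
      using first less.prems unfolding S_def by blast
  next
    case False
    define p0 where "p0 = Max S"
    have "finite S"
      unfolding S_def by (rule finite_subset[of _ "{..<p}"]) auto
    then have "p0 \<in> S" and bound: "\<forall>q\<in>S. q \<le> p0"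
      using False unfolding p0_def by auto
    then have p0_empty: "1 \<le> p0" "p0 < p" "\<not> \<rho> p0"
      unfolding S_def by auto
    have between: "\<forall>q. p0 < q \<and> q < p \<longrightarrow> \<rho> q"
      using bound p0_empty(1) unfolding S_def
      by (metis (mono_tags, lifting) le_trans less_imp_le_nat mem_Collect_eq not_le)
    have "P p0"
      using less.IH less.prems(2) p0_empty by simp
    then show ?thesis
      using step[of p0 p] less.prems p0_empty between by blast
  qed
qed

locale es_configuration =
  fixes m n :: nat and C :: "nat \<Rightarrow> nat \<Rightarrow> bool"
  assumes ES: "ES m n C"
begin

lemma not_blocked: "\<not> blocked m n C i j"
  using ES unfolding ES_def maximal_def permissible_def by blast

lemma no_house_below_triple:
  assumes "1 \<le> i" "i < m" "2 \<le> j" "j < n" "C i (j - 1)" "C i j" "C i (j + 1)"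
  shows "\<not> C (Suc i) j"
  using not_blocked[of i j] assms unfolding blocked_def occ_def in_grid_def by auto

lemma blocked_if_built:
  assumes "1 \<le> i" "i \<le> m" "1 \<le> j" "j \<le> n" "\<not> C i j"
  shows "blocked m n (add_house C i j) i j"
  using ES assms unfolding ES_def resistant_predators_def in_grid_def by blast

lemma empty_lot_interior:
  assumes "1 \<le> i" "i \<le> m" "1 \<le> j" "j \<le> n" "\<not> C i j"
  shows "2 \<le> j" "j < n" "i < m"
  using blocked_if_built[OF assms] assms
  unfolding blocked_def occ_def in_grid_def add_house_def by auto

lemma empty_lot_neighbours:
  assumes "1 \<le> i" "i \<le> m" "1 \<le> j" "j \<le> n" "\<not> C i j"
  shows "C i (j - 1)" "C i (j + 1)" "C (Suc i) j"
  using blocked_if_built[OF assms] assms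
  unfolding blocked_def occ_def in_grid_def add_house_def by auto

lemma house_above_empty:
  assumes "1 \<le> a" "Suc a \<le> m" "1 \<le> p" "p \<le> n" "\<not> C (Suc a) p"
  shows "C a p"
  using empty_lot_neighbours(3)[of a p] assms by auto

lemma last_row_full: "1 \<le> m \<Longrightarrow> 1 \<le> j \<Longrightarrow> j \<le> n \<Longrightarrow> C m j"
  using empty_lot_interior(3)[of m j] by auto

lemma first_column_full: "1 \<le> i \<Longrightarrow> i \<le> m \<Longrightarrow> 1 \<le> n \<Longrightarrow> C i 1"
  using empty_lot_interior(1)[of i 1] by fastforce

lemma altruist_cases:
  assumes "1 \<le> i" "i \<le> m" "1 \<le> j" "j \<le> n" "\<not> C i j"
  shows "3 \<le> j \<and> i < m \<and> C i (j - 2) \<and> C i (j - 1) \<and> C (Suc i) (j - 1)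
       \<or> j + 2 \<le> n \<and> i < m \<and> C i (j + 1) \<and> C i (j + 2) \<and> C (Suc i) (j + 1)
       \<or> 2 \<le> i \<and> C (i - 1) (j - 1) \<and> C (i - 1) j \<and> C (i - 1) (j + 1)"
proof -
  obtain i' j' where occupied: "occ m n C i' j'" and b: "blocked m n (add_house C i j) i' j'"
    using ES assms unfolding ES_def resistant_altruists_def in_grid_def by blast
  have "(i', j') \<noteq> (i, j)"
    using occupied assms unfolding occ_def by auto
  then have "(i', j' - 1) = (i, j) \<or> (i', j' + 1) = (i, j) \<or> (i' + 1, j') = (i, j)"
    using b not_blocked[of i' j'] unfolding blocked_def occ_def add_house_def
    by (auto split: if_splits)
  then show ?thesis
  proof (elim disjE)
    assume "(i', j' - 1) = (i, j)"
    then have "i' = i" "j' = j + 1"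
      using b unfolding blocked_def by auto
    then show ?thesis
      using b occupied unfolding blocked_def occ_def add_house_def in_grid_def by auto
  next
    assume "(i', j' + 1) = (i, j)"
    then have "i' = i" "j = j' + 1"
      by auto
    then show ?thesis
      using b occupied unfolding blocked_def occ_def add_house_def in_grid_def
      by (auto simp: numeral_2_eq_2 numeral_3_eq_3)
  next
    assume "(i' + 1, j') = (i, j)"
    then have "i = i' + 1" "j' = j"
      by auto
    then show ?thesis
      using b occupied unfolding blocked_def occ_def add_house_def in_grid_def by auto
  qed
qed

lemma no_four_in_a_row:
  assumes "1 \<le> b" "b < m" "1 \<le> q" "q + 3 \<le> n"
    "C b q" "C b (q + 1)" "C b (q + 2)" "C b (q + 3)"
  shows False
proof -
  have "\<not> C (Suc b) (q + 1)" "\<not> C (Suc b) (q + 2)"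
    using no_house_below_triple[of b "q + 1"] no_house_below_triple[of b "q + 2"] assms
    by (auto simp: numeral_eq_Suc)
  moreover have "C (Suc b) (q + 2)" if "\<not> C (Suc b) (q + 1)"
    using empty_lot_neighbours(2)[of "Suc b" "q + 1"] that assms by (auto simp: numeral_eq_Suc)
  ultimately show False
    by blast
qed

lemma lone_house_below_empty:
  assumes "1 \<le> b" "b + 2 \<le> m" "lone_house n (C (Suc b)) c"
  shows "\<not> C b c"
proof
  assume "C b c"
  from assms(3) have c: "2 \<le> c" "c + 1 \<le> n" "\<not> C (Suc b) (c - 1)" "C (Suc b) c" "\<not> C (Suc b) (c + 1)"
    unfolding lone_house_def by auto
  then have "C b (c - 1)" "C b (c + 1)"
    using house_above_empty[of b "c - 1"] house_above_empty[of b "c + 1"] assms by auto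
  with \<open>C b c\<close> have "\<not> C (Suc b) c"
    using no_house_below_triple[of b c] c assms by auto
  with c show False
    by simp
qed

lemma triple_two_rows_above_lone_house:
  assumes "1 \<le> b" "b + 2 \<le> m" "lone_house n (C (Suc b)) c"
  shows "2 \<le> b \<and> C (b - 1) (c - 1) \<and> C (b - 1) c \<and> C (b - 1) (c + 1)"
proof -
  have "\<not> C b c"
    using lone_house_below_empty assms by blast
  moreover have "2 \<le> c" "c + 1 \<le> n" "\<not> C (Suc b) (c - 1)" "\<not> C (Suc b) (c + 1)"
    using assms(3) unfolding lone_house_def by auto
  ultimately show ?thesis
    using altruist_cases[of b c] assms by auto
qed

lemma next_empty_cases:
  assumes "1 \<le> a" "Suc (Suc a) \<le> m" "1 \<le> p0" "\<not> C (Suc a) p0" "\<not> C (Suc a) p" "p \<le> n" "p0 < p"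
    "\<forall>q. p0 < q \<and> q < p \<longrightarrow> C (Suc a) q"
  shows "p = p0 + 2 \<or> p = p0 + 3 \<or> p = p0 + 4"
proof -
  have "p \<noteq> p0 + 1"
    using empty_lot_neighbours(2)[of "Suc a" p0] assms by auto
  moreover have "\<not> p0 + 5 \<le> p"
    using no_four_in_a_row[of "Suc a" "p0 + 1"] assms by (auto simp: add.assoc)
  ultimately show ?thesis
    using assms(7) by linarith
qed

lemma first_empty_cases:
  assumes "1 \<le> a" "Suc (Suc a) \<le> m" "\<not> C (Suc a) p" "1 \<le> p" "p \<le> n"
    "\<forall>q. 1 \<le> q \<and> q < p \<longrightarrow> C (Suc a) q"
  shows "p = 2 \<or> p = 3 \<or> p = 4"
proof -
  have "p \<noteq> 1"
    using empty_lot_interior(1)[of "Suc a" p] assms by auto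
  moreover have "\<not> 5 \<le> p"
    using no_four_in_a_row[of "Suc a" 1] assms by auto
  ultimately show ?thesis
    using assms by linarith
qed

lemma row_above_gap_2:
  assumes "1 \<le> a" "Suc a < m" "1 \<le> p0" "p0 + 2 < n"
    "\<not> C (Suc a) p0" "C (Suc a) (p0 + 1)" "\<not> C (Suc a) (p0 + 2)"
  shows "\<not> C a (p0 + 1)"
proof
  assume "C a (p0 + 1)"
  moreover have "C a p0" "C a (p0 + 2)"
    using house_above_empty[of a p0] house_above_empty[of a "p0 + 2"] assms by auto
  ultimately have "\<not> C (Suc a) (p0 + 1)"
    using no_house_below_triple[of a "p0 + 1"] assms by auto
  with assms show False
    by simp
qed

lemma row_above_gap_3:
  assumes "1 \<le> a" "Suc a < m" "1 \<le> p0" "p0 + 3 < n"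
    "\<not> C (Suc a) p0" "C (Suc a) (p0 + 1)" "C (Suc a) (p0 + 2)" "\<not> C (Suc a) (p0 + 3)"
  shows "C a (p0 + 1) \<noteq> C a (p0 + 2)"
proof -
  have "C a p0" "C a (p0 + 3)"
    using house_above_empty[of a p0] house_above_empty[of a "p0 + 3"] assms by auto
  then have "\<not> (C a (p0 + 1) \<and> C a (p0 + 2))"
    using no_four_in_a_row[of a p0] assms by (auto simp: add.assoc)
  moreover have "\<not> (\<not> C a (p0 + 1) \<and> \<not> C a (p0 + 2))"
    using empty_lot_neighbours(2)[of a "p0 + 1"] assms by auto
  ultimately show ?thesis
    by blast
qed

lemma row_above_gap_4:
  assumes "1 \<le> a" "Suc a < m" "1 \<le> p0" "p0 + 4 < n" "\<not> C (Suc a) p0"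
    "C (Suc a) (p0 + 1)" "C (Suc a) (p0 + 2)" "C (Suc a) (p0 + 3)" "\<not> C (Suc a) (p0 + 4)"
  shows "C a (p0 + 1) \<and> \<not> C a (p0 + 2) \<and> C a (p0 + 3)"
proof -
  have w0: "C a p0" and w4: "C a (p0 + 4)"
    using house_above_empty[of a p0] house_above_empty[of a "p0 + 4"] assms by auto
  have "\<not> C a (p0 + 2)"
  proof
    assume w2: "C a (p0 + 2)"
    have "\<not> C a (p0 + 1)"
      using no_house_below_triple[of a "p0 + 1"] w0 w2 assms by auto
    moreover have "\<not> C a (p0 + 3)"
      using no_house_below_triple[of a "p0 + 3"] w4 w2 assms by (auto simp: numeral_eq_Suc)
    ultimately have "2 \<le> a" "C (a - 1) (p0 + 1)" "C (a - 1) (p0 + 2)" "C (a - 1) (p0 + 3)"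
      using altruist_cases[of a "p0 + 1"] altruist_cases[of a "p0 + 3"] assms
      by (auto simp: numeral_eq_Suc)
    then have "\<not> C (Suc (a - 1)) (p0 + 2)"
      using no_house_below_triple[of "a - 1" "p0 + 2"] assms by (auto simp: numeral_eq_Suc)
    with w2 \<open>2 \<le> a\<close> show False
      by simp
  qed
  then show ?thesis
    using empty_lot_neighbours(1,2)[of a "p0 + 2"] assms by (auto simp: numeral_eq_Suc)
qed

lemma row_below_gap_2:
  assumes "1 \<le> a" "Suc (Suc (Suc a)) \<le> m" "2 \<le> p0" "p0 + 2 < n"
    "\<not> C (Suc a) p0" "C (Suc a) (p0 + 1)" "\<not> C (Suc a) (p0 + 2)"
  shows "\<not> C (Suc (Suc a)) (p0 + 1)"
proof
  let ?y = "Suc (Suc a)"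
  assume y1: "C ?y (p0 + 1)"
  have y0: "C ?y p0" and y2: "C ?y (p0 + 2)"
    using empty_lot_neighbours(3)[of "Suc a" p0] empty_lot_neighbours(3)[of "Suc a" "p0 + 2"] assms
    by auto
  have below: "\<not> C (Suc ?y) (p0 + 1)"
    using no_house_below_triple[of ?y "p0 + 1"] y0 y1 y2 assms by auto
  have "\<not> C ?y (p0 - 1)"
  proof
    assume "C ?y (p0 - 1)"
    then have "\<not> C (Suc ?y) p0"
      using no_house_below_triple[of ?y p0] y0 y1 assms by auto
    then show False
      using empty_lot_neighbours(2)[of "Suc ?y" p0] below assms by auto
  qed
  moreover have "\<not> C ?y (p0 + 3)"
  proof
    assume "C ?y (p0 + 3)"
    then have "\<not> C (Suc ?y) (p0 + 2)"
      using no_house_below_triple[of ?y "p0 + 2"] y1 y2 assms by (auto simp: numeral_eq_Suc)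
    then show False
      using empty_lot_neighbours(1)[of "Suc ?y" "p0 + 2"] below assms by (auto simp: numeral_eq_Suc)
  qed
  ultimately have "C a p0" "C a (p0 + 1)" "C a (p0 + 2)"
    using altruist_cases[of "Suc a" p0] altruist_cases[of "Suc a" "p0 + 2"] assms
    by (auto simp: numeral_eq_Suc)
  then have "\<not> C (Suc a) (p0 + 1)"
    using no_house_below_triple[of a "p0 + 1"] assms by auto
  with assms show False
    by simp
qed

lemma row_below_gap_3:
  assumes "1 \<le> a" "Suc (Suc (Suc a)) \<le> m" "1 \<le> p0" "p0 + 3 < n"
    "\<not> C (Suc a) p0" "C (Suc a) (p0 + 1)" "C (Suc a) (p0 + 2)" "\<not> C (Suc a) (p0 + 3)"
  shows "C (Suc (Suc a)) (p0 + 1) \<noteq> C (Suc (Suc a)) (p0 + 2)"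
proof -
  let ?y = "Suc (Suc a)"
  have "C ?y p0" "C ?y (p0 + 3)"
    using empty_lot_neighbours(3)[of "Suc a" p0] empty_lot_neighbours(3)[of "Suc a" "p0 + 3"] assms
    by auto
  then have "\<not> (C ?y (p0 + 1) \<and> C ?y (p0 + 2))"
    using no_four_in_a_row[of ?y p0] assms by (auto simp: add.assoc)
  moreover have "\<not> (\<not> C ?y (p0 + 1) \<and> \<not> C ?y (p0 + 2))"
    using empty_lot_neighbours(2)[of ?y "p0 + 1"] assms by auto
  ultimately show ?thesis
    by blast
qed

lemma row_below_gap_4:
  assumes "1 \<le> a" "Suc (Suc (Suc a)) \<le> m" "1 \<le> p0" "p0 + 4 < n"
    "C (Suc a) (p0 + 1)" "C (Suc a) (p0 + 2)" "C (Suc a) (p0 + 3)"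
  shows "C (Suc (Suc a)) (p0 + 1) \<and> \<not> C (Suc (Suc a)) (p0 + 2) \<and> C (Suc (Suc a)) (p0 + 3)"
proof -
  have "\<not> C (Suc (Suc a)) (p0 + 2)"
    using no_house_below_triple[of "Suc a" "p0 + 2"] assms by (auto simp: numeral_eq_Suc)
  then show ?thesis
    using empty_lot_neighbours(1,2)[of "Suc (Suc a)" "p0 + 2"] assms by (auto simp: numeral_eq_Suc)
qed

lemma no_pattern_inside_gap:
  assumes "1 \<le> a" "Suc (Suc (Suc a)) \<le> m" "1 \<le> p0" "\<not> C (Suc a) p0" "\<not> C (Suc a) p" "p \<le> n"
    "\<forall>q. p0 < q \<and> q < p \<longrightarrow> C (Suc a) q" "p0 < q" "q < p"
  shows "\<not> house_triple n (C a) q" "\<not> lone_house n (C a) q"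
    "\<not> house_triple n (C (Suc (Suc a))) q" "\<not> lone_house n (C (Suc (Suc a))) q"
proof -
  let ?y = "Suc (Suc a)"
  have p0: "2 \<le> p0" and "p < n"
    using empty_lot_interior[of "Suc a" p0] empty_lot_interior[of "Suc a" p] assms by auto
  have gap: "p = p0 + 2 \<or> p = p0 + 3 \<or> p = p0 + 4"
    using next_empty_cases[of a p0 p] assms by auto
  have x: "C (Suc a) q"
    using assms by auto
  show "\<not> house_triple n (C a) q"
    using no_house_below_triple[of a q] x assms unfolding house_triple_def by auto
  show "\<not> lone_house n (C ?y) q"
    using lone_house_below_empty[of "Suc a" q] x assms by auto
  have w: "C a p0" "C a p"
    using house_above_empty[of a p0] house_above_empty[of a p] assms by auto
  from gap show "\<not> lone_house n (C a) q"
  proof (elim disjE)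
    assume "p = p0 + 2"
    with assms have "q = p0 + 1"
      by auto
    with w \<open>p = p0 + 2\<close> show ?thesis
      unfolding lone_house_def by auto
  next
    assume "p = p0 + 3"
    with assms have "q = p0 + 1 \<or> q = p0 + 2"
      by auto
    with w \<open>p = p0 + 3\<close> show ?thesis
      unfolding lone_house_def by (auto simp: numeral_eq_Suc)
  next
    assume "p = p0 + 4"
    with assms have "q = p0 + 1 \<or> q = p0 + 2 \<or> q = p0 + 3"
      by auto
    with w \<open>p = p0 + 4\<close> show ?thesis
      using row_above_gap_4[of a p0] assms \<open>p < n\<close> unfolding lone_house_def
      by (auto simp: numeral_eq_Suc)
  qed
  from gap show "\<not> house_triple n (C ?y) q"
  proof (elim disjE)
    assume "p = p0 + 2"
    with assms have "q = p0 + 1"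
      by auto
    moreover have "\<not> C ?y (p0 + 1)"
      using row_below_gap_2[of a p0] assms p0 \<open>p < n\<close> \<open>p = p0 + 2\<close> by simp
    ultimately show ?thesis
      unfolding house_triple_def by simp
  next
    assume "p = p0 + 3"
    with assms have "q = p0 + 1 \<or> q = p0 + 2"
      by auto
    with \<open>p = p0 + 3\<close> show ?thesis
      using row_below_gap_3[of a p0] assms \<open>p < n\<close> unfolding house_triple_def by auto
  next
    assume "p = p0 + 4"
    with assms have "q = p0 + 1 \<or> q = p0 + 2 \<or> q = p0 + 3"
      by auto
    with \<open>p = p0 + 4\<close> show ?thesis
      using row_below_gap_4[of a p0] assms \<open>p < n\<close> unfolding house_triple_def
      by (auto simp: numeral_eq_Suc)
  qed
qed

text \<open>Invariant at an empty lot p of row a + 1; the second conjunct is the strengthening needed to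
  carry the first one from one empty lot to the next.\<close>
definition scan_invariant :: "nat \<Rightarrow> nat \<Rightarrow> bool" where
  "scan_invariant a p \<longleftrightarrow>
     (lone_house n (C (Suc (Suc a))) p \<longrightarrow> last_pattern_triple n (C (Suc (Suc a))) (p - 1)) \<and>
     (\<not> last_pattern_triple n (C (Suc (Suc a))) p \<longrightarrow>
        C a (p + 1) \<and> \<not> C (Suc (Suc a)) (p + 1) \<or>
        C a (p + 1) = C (Suc (Suc a)) (p + 1) \<and> \<not> last_pattern_triple n (C a) p)"

lemma scan_invariant_first:
  assumes a: "2 \<le> a" "a + 3 \<le> m" and w: "triple_before_lone n (C a)"
    and "1 \<le> p" "p \<le> n" "\<not> C (Suc a) p"
    and before: "\<forall>q. 1 \<le> q \<and> q < p \<longrightarrow> C (Suc a) q"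
  shows "scan_invariant a p"
proof -
  let ?y = "Suc (Suc a)"
  have a': "1 \<le> a" "Suc (Suc (Suc a)) \<le> m" "Suc a < m" "Suc (Suc a) \<le> m"
    using a by auto
  have p: "2 \<le> p" "p < n"
    using empty_lot_interior[of "Suc a" p] a' assms by auto
  have first: "C a 1" "C (Suc a) 1" "C ?y 1"
    using first_column_full a' p by auto
  have at_p: "C a p" "C ?y p"
    using house_above_empty[of a p] empty_lot_neighbours(3)[of "Suc a" p] a' assms by auto
  have w_lone: "\<And>c. lone_house n (C a) c \<Longrightarrow> last_pattern_triple n (C a) (c - 1)"
    using w unfolding triple_before_lone_def by blast
  consider "p = 2" | "p = 3" | "p = 4"
    using first_empty_cases[of a p] a' assms by auto
  then show ?thesis
  proof cases
    case 1
    then show ?thesis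
      unfolding scan_invariant_def using p first at_p
      by (auto simp: last_pattern_triple_small house_triple_def lone_house_def)
  next
    case 2
    have "\<not> C a 2"
      using no_house_below_triple[of a 2] before first at_p a' p 2 by auto
    moreover have "\<not> lone_house n (C ?y) 3"
      using triple_two_rows_above_lone_house[of "Suc a" 3] calculation a' by auto
    moreover have "\<not> lone_house n (C a) 3"
      using w_lone[of 3] calculation by (auto simp: last_pattern_triple_small house_triple_def)
    ultimately show ?thesis
      unfolding scan_invariant_def using 2 p first at_p
      by (auto simp: last_pattern_triple_small house_triple_def lone_house_def)
  next
    case 3
    have "\<not> C ?y 2"
      using no_house_below_triple[of "Suc a" 2] before first a' p 3 by auto
    then have "C ?y 3"
      using empty_lot_neighbours(2)[of ?y 2] a' p 3 by auto
    have "\<not> (C a 2 \<and> C a 3)"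
      using no_house_below_triple[of a 2] before first a' p 3 by auto
    then have "\<not> last_pattern_triple n (C a) 3"
      using at_p 3 by (auto simp: last_pattern_triple_small house_triple_def lone_house_def)
    moreover have "\<not> lone_house n (C a) 4"
      using w_lone[of 4] calculation by auto
    ultimately show ?thesis
      unfolding scan_invariant_def using 3 p first at_p \<open>\<not> C ?y 2\<close> \<open>C ?y 3\<close> \<open>\<not> (C a 2 \<and> C a 3)\<close>
      by (auto simp: last_pattern_triple_small house_triple_def lone_house_def)
  qed
qed

lemma scan_invariant_step:
  assumes a: "2 \<le> a" "a + 3 \<le> m" and w: "triple_before_lone n (C a)"
    and "1 \<le> p0" "\<not> C (Suc a) p0" "p0 < p" "p \<le> n" "\<not> C (Suc a) p"
    "\<forall>q. p0 < q \<and> q < p \<longrightarrow> C (Suc a) q"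
    and IH: "scan_invariant a p0"
  shows "scan_invariant a p"
proof -
  let ?y = "Suc (Suc a)"
  have a': "1 \<le> a" "Suc (Suc (Suc a)) \<le> m" "Suc a < m"
    using a by auto
  have p: "2 \<le> p" "p < n" and "2 \<le> p0"
    using empty_lot_interior[of "Suc a" p] empty_lot_interior[of "Suc a" p0] a' assms by auto
  have at_p: "C a p" "C ?y p"
    using house_above_empty[of a p] empty_lot_neighbours(3)[of "Suc a" p] a' assms by auto
  note at_p_patterns =
    last_pattern_triple_at_house[of "C a" p n, OF at_p(1) p]
    lone_house_at_house[of "C a" p n, OF at_p(1) p]
    last_pattern_triple_at_house[of "C ?y" p n, OF at_p(2) p]
    lone_house_at_house[of "C ?y" p n, OF at_p(2) p]
  have gap: "p = p0 + 2 \<or> p = p0 + 3 \<or> p = p0 + 4"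
    using next_empty_cases[of a p0 p] a' assms by auto
  have scan_w: "last_pattern_triple n (C a) (p - 1) = last_pattern_triple n (C a) p0"
    and scan_y: "last_pattern_triple n (C ?y) (p - 1) = last_pattern_triple n (C ?y) p0"
    using no_pattern_inside_gap[of a p0 p] a' assms
    by (auto intro!: last_pattern_triple_const)
  have lone_y: "lone_house n (C ?y) p \<longrightarrow> C a (p - 1) \<and> C a (p + 1)"
    using triple_two_rows_above_lone_house[of "Suc a" p] a' by auto
  have lone_w: "lone_house n (C a) p \<longrightarrow> last_pattern_triple n (C a) (p - 1)"
    using w unfolding triple_before_lone_def by blast
  have IH': "\<not> last_pattern_triple n (C ?y) p0 \<longrightarrow>
      C a (p0 + 1) \<and> \<not> C ?y (p0 + 1) \<or>
      C a (p0 + 1) = C ?y (p0 + 1) \<and> \<not> last_pattern_triple n (C a) p0"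
    using IH unfolding scan_invariant_def by blast
  note scan_facts = at_p_patterns scan_w scan_y lone_y lone_w IH'
  from gap show ?thesis
  proof (elim disjE)
    assume "p = p0 + 2"
    then have "p - 1 = p0 + 1" "\<not> C a (p0 + 1)" "\<not> C ?y (p0 + 1)"
      using row_above_gap_2[of a p0] row_below_gap_2[of a p0] a' assms p \<open>2 \<le> p0\<close> by auto
    then show ?thesis
      unfolding scan_invariant_def using scan_facts by auto
  next
    assume "p = p0 + 3"
    then have "p - 1 = p0 + 2" "C a (p0 + 1) \<noteq> C a (p0 + 2)" "C ?y (p0 + 1) \<noteq> C ?y (p0 + 2)"
      using row_above_gap_3[of a p0] row_below_gap_3[of a p0] a' assms p by auto
    then show ?thesis
      unfolding scan_invariant_def using scan_facts by auto
  next
    assume "p = p0 + 4"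
    then have "p - 1 = p0 + 3" "C a (p0 + 1)" "C a (p0 + 3)" "C ?y (p0 + 1)" "C ?y (p0 + 3)"
      using row_above_gap_4[of a p0] row_below_gap_4[of a p0] a' assms p by auto
    then show ?thesis
      unfolding scan_invariant_def using scan_facts by auto
  qed
qed

lemma triple_before_lone_two_rows_down:
  assumes "2 \<le> a" "a + 3 \<le> m" and w: "triple_before_lone n (C a)"
  shows "triple_before_lone n (C (Suc (Suc a)))"
  unfolding triple_before_lone_def
proof (intro allI impI)
  fix c
  assume lone: "lone_house n (C (Suc (Suc a))) c"
  then have "1 \<le> c" "c \<le> n" "\<not> C (Suc a) c"
    using lone_house_below_empty[of "Suc a" c] assms unfolding lone_house_def by auto
  then have "scan_invariant a c"
    by (rule empty_lots_induct)
      (use scan_invariant_first[OF assms] scan_invariant_step[OF assms] in blast)+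
  with lone show "last_pattern_triple n (C (Suc (Suc a))) (c - 1)"
    unfolding scan_invariant_def by blast
qed

lemma no_lone_house_row_2: "3 \<le> m \<Longrightarrow> \<not> lone_house n (C 2) c"
  using triple_two_rows_above_lone_house[of 1 c] by (auto simp: numeral_2_eq_2)

lemma triple_before_lone_row_2: "3 \<le> m \<Longrightarrow> triple_before_lone n (C 2)"
  using no_lone_house_row_2 unfolding triple_before_lone_def by blast

definition scan_invariant_row_3 :: "nat \<Rightarrow> bool" where
  "scan_invariant_row_3 p \<longleftrightarrow>
     (lone_house n (C 3) p \<longrightarrow> last_pattern_triple n (C 3) (p - 1)) \<and>
     (\<not> last_pattern_triple n (C 3) p \<longrightarrow> \<not> C 3 (p + 1))"

lemma scan_invariant_row_3_first:
  assumes "4 \<le> m" "1 \<le> p" "p \<le> n" "\<not> C 2 p"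
    and before: "\<forall>q. 1 \<le> q \<and> q < p \<longrightarrow> C 2 q"
  shows "scan_invariant_row_3 p"
proof -
  have p: "2 \<le> p" "p < n"
    using empty_lot_interior[of 2 p] assms by auto
  have first: "C 1 1" "C 2 1" "C 3 1"
    using first_column_full assms p by auto
  have "C 3 p"
    using empty_lot_neighbours(3)[of 2 p] assms by auto
  consider "p = 2" | "p = 3" | "p = 4"
    using first_empty_cases[of 1 p] assms by (auto simp: eval_nat_numeral)
  then show ?thesis
  proof cases
    case 1
    then show ?thesis
      unfolding scan_invariant_row_3_def using p first \<open>C 3 p\<close>
      by (auto simp: last_pattern_triple_small house_triple_def lone_house_def)
  next
    case 2
    have "C 1 3"
      using house_above_empty[of 1 3] assms 2 by (auto simp: eval_nat_numeral)
    then have "\<not> C 1 2"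
      using no_house_below_triple[of 1 2] first before assms 2 by (auto simp: eval_nat_numeral)
    then show ?thesis
      using altruist_cases[of 1 2] assms 2 by (auto simp: eval_nat_numeral)
  next
    case 3
    have "\<not> C 3 2"
      using no_house_below_triple[of 2 2] first before assms 3 by (auto simp: eval_nat_numeral)
    moreover have "C 3 3"
      using empty_lot_neighbours(2)[of 3 2] calculation assms 3 by (auto simp: eval_nat_numeral)
    ultimately show ?thesis
      unfolding scan_invariant_row_3_def using 3 p first \<open>C 3 p\<close>
      by (auto simp: last_pattern_triple_small house_triple_def lone_house_def)
  qed
qed

lemma scan_invariant_row_3_step:
  assumes "4 \<le> m" "1 \<le> p0" "\<not> C 2 p0" "p0 < p" "p \<le> n" "\<not> C 2 p"
    and between: "\<forall>q. p0 < q \<and> q < p \<longrightarrow> C 2 q"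
    and IH: "scan_invariant_row_3 p0"
  shows "scan_invariant_row_3 p"
proof -
  have p: "2 \<le> p" "p < n" and "2 \<le> p0"
    using empty_lot_interior[of 2 p] empty_lot_interior[of 2 p0] assms by auto
  have "C 3 p"
    using empty_lot_neighbours(3)[of 2 p] assms by auto
  note at_p_patterns =
    last_pattern_triple_at_house[of "C 3" p n, OF this p]
    lone_house_at_house[of "C 3" p n, OF this p]
  have "p \<noteq> p0 + 2"
    using no_lone_house_row_2[of "p0 + 1"] between assms p unfolding lone_house_def by auto
  then have gap: "p = p0 + 3 \<or> p = p0 + 4"
    using next_empty_cases[of 1 p0 p] assms by (auto simp: eval_nat_numeral)
  have scan: "last_pattern_triple n (C 3) (p - 1) = last_pattern_triple n (C 3) p0"
    using no_pattern_inside_gap[of 1 p0 p] assms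
    by (auto simp: numeral_eq_Suc intro!: last_pattern_triple_const)
  have IH': "\<not> last_pattern_triple n (C 3) p0 \<longrightarrow> \<not> C 3 (p0 + 1)"
    using IH unfolding scan_invariant_row_3_def by blast
  from gap show ?thesis
  proof (elim disjE)
    assume "p = p0 + 3"
    then have "p - 1 = p0 + 2" "C 3 (p0 + 1) \<noteq> C 3 (p0 + 2)"
      using row_below_gap_3[of 1 p0] assms p by (auto simp: numeral_eq_Suc)
    then show ?thesis
      unfolding scan_invariant_row_3_def using at_p_patterns scan IH' by auto
  next
    assume "p = p0 + 4"
    then have "p - 1 = p0 + 3" "C 3 (p0 + 1)" "C 3 (p0 + 3)"
      using row_below_gap_4[of 1 p0] assms p by (auto simp: numeral_eq_Suc)
    then show ?thesis
      unfolding scan_invariant_row_3_def using at_p_patterns scan IH' by auto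
  qed
qed

text \<open>Row 1 need not satisfy triple_before_lone, so row 3 is started instead from row 2,
  which contains no lone house at all.\<close>
lemma triple_before_lone_row_3:
  assumes "4 \<le> m"
  shows "triple_before_lone n (C 3)"
  unfolding triple_before_lone_def
proof (intro allI impI)
  fix c
  assume lone: "lone_house n (C 3) c"
  then have "1 \<le> c" "c \<le> n" "\<not> C 2 c"
    using lone_house_below_empty[of 2 c] assms unfolding lone_house_def by (auto simp: eval_nat_numeral)
  then have "scan_invariant_row_3 c"
    by (rule empty_lots_induct)
      (use scan_invariant_row_3_first[OF assms] scan_invariant_row_3_step[OF assms] in blast)+
  with lone show "last_pattern_triple n (C 3) (c - 1)"
    unfolding scan_invariant_row_3_def by blast
qed

lemma triple_before_lone_rows: "2 \<le> r \<Longrightarrow> r < m \<Longrightarrow> triple_before_lone n (C r)"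
proof (induction r rule: less_induct)
  case (less r)
  consider "r = 2" | "r = 3" | "4 \<le> r"
    using less.prems by linarith
  then show ?case
  proof cases
    case 3
    then have "triple_before_lone n (C (r - 2))"
      using less by auto
    moreover have "Suc (Suc (r - 2)) = r"
      using 3 by simp
    ultimately show ?thesis
      using triple_before_lone_two_rows_down[of "r - 2"] 3 less.prems by auto
  qed (use less.prems triple_before_lone_row_2 triple_before_lone_row_3 in auto)
qed

lemma no_triple_above_last_row:
  assumes "2 \<le> m"
  shows "\<not> house_triple n (C (m - 1)) c"
proof -
  have "1 \<le> m - 1" "m - 1 < m" "Suc (m - 1) = m"
    using assms by auto
  then show ?thesis
    using no_house_below_triple[of "m - 1" c] last_row_full[of c]
    unfolding house_triple_def by auto
qed

end

theorem mainTheorem12: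
  fixes m n :: nat and C :: "nat \<Rightarrow> nat \<Rightarrow> bool"
  assumes "m > 2" and "ES m n C"
  shows "\<not> (\<exists>j. 2 \<le> j \<and> j \<le> n - 1 \<and> \<not> C (m - 1) (j - 1) \<and> C (m - 1) j \<and> \<not> C (m - 1) (j + 1))"
proof
  assume "\<exists>j. 2 \<le> j \<and> j \<le> n - 1 \<and> \<not> C (m - 1) (j - 1) \<and> C (m - 1) j \<and> \<not> C (m - 1) (j + 1)"
  then obtain j where "2 \<le> j" "j \<le> n - 1" "\<not> C (m - 1) (j - 1)" "C (m - 1) j" "\<not> C (m - 1) (j + 1)"
    by blast
  then have "lone_house n (C (m - 1)) j"
    unfolding lone_house_def by auto
  interpret es_configuration m n C
    by standard (rule assms(2))
  have "triple_before_lone n (C (m - 1))"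
    using triple_before_lone_rows[of "m - 1"] assms(1) by auto
  with \<open>lone_house n (C (m - 1)) j\<close> obtain c where "house_triple n (C (m - 1)) c"
    unfolding triple_before_lone_def by (blast elim: last_pattern_tripleE)
  with no_triple_above_last_row show False
    using assms(1) by simp
qed

end
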